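(* If $G \le \mathrm{Sym}(\mathbb{N})$ is a cofinitary group that is eventually bounded, then $G$ is not a maximal cofinitary group. In particular, no maximal cofinitary group is a $K_\sigma$ subset of $\mathbb{N}^{\mathbb{N}}$.
   Context: $\mathrm{Sym}(\mathbb{N})\subseteq\mathbb{N}^{\mathbb{N}}$ is the group of bijections of $\mathbb{N}$, with the topology inherited from Baire space. A subgroup is cofinitary if each non-identity element has finitely many fixed points, and maximal cofinitary if it is cofinitary and not properly contained in another cofinitary subgroup. For $f,g\in\mathbb{N}^{\mathbb{N}}$, $f<^* g$ means $f(n)<g(n)$ for all but finitely many $n$; a set $S\subseteq\mathbb{N}^{\mathbb{N}}$ is eventually bounded if there is $f\in\mathbb{N}^{\mathbb{N}}$ with $g<^*f$ for all $g\in S$. A set is $K_\sigma$ if it is contained in a countable union of compact sets. *)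

theory Defs
  imports "HOL-Analysis.Analysis"
begin

text \<open>Baire space is nat => nat with the product topology (Function_Topology);
  nat carries its discrete (metric) topology.\<close>

definition Sym_subgroup :: "(nat \<Rightarrow> nat) set \<Rightarrow> bool" where
  "Sym_subgroup G \<longleftrightarrow> G \<subseteq> {f. bij f} \<and> id \<in> G \<and>
     (\<forall>f\<in>G. \<forall>g\<in>G. f \<circ> g \<in> G) \<and> (\<forall>f\<in>G. inv f \<in> G)"

definition cofinitary :: "(nat \<Rightarrow> nat) set \<Rightarrow> bool" where
  "cofinitary G \<longleftrightarrow> Sym_subgroup G \<and> (\<forall>g\<in>G. g \<noteq> id \<longrightarrow> finite {n. g n = n})"

definition maximal_cofinitary :: "(nat \<Rightarrow> nat) set \<Rightarrow> bool" where
  "maximal_cofinitary G \<longleftrightarrow> cofinitary G \<and> \<not> (\<exists>H. cofinitary H \<and> G \<subset> H)"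

definition eventually_less :: "(nat \<Rightarrow> nat) \<Rightarrow> (nat \<Rightarrow> nat) \<Rightarrow> bool" where
  "eventually_less f g \<longleftrightarrow> finite {n. \<not> f n < g n}"

definition eventually_bounded :: "(nat \<Rightarrow> nat) set \<Rightarrow> bool" where
  "eventually_bounded S \<longleftrightarrow> (\<exists>f. \<forall>g\<in>S. eventually_less g f)"

definition K_sigma :: "(nat \<Rightarrow> nat) set \<Rightarrow> bool" where
  "K_sigma S \<longleftrightarrow> (\<exists>K :: nat \<Rightarrow> (nat \<Rightarrow> nat) set. (\<forall>i. compact (K i)) \<and> S \<subseteq> (\<Union>i. K i))"

end

theory Submission
  imports Defs "HOL-Library.Nat_Bijection"
begin

(* Let G be cofinitary with every element eventually below some f, which we may take
   increasing with n < f n.  We build a permutation s (inverse s') of N that shifts along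
   a partition of N into Z-indexed chains.  The chains are chosen so that
     (a) every point is moved upwards by s or by s',
     (b) off an f-sparse set S (any two points x < y of S satisfy f x <= y), both s and s'
         jump beyond f, and the complement of S is infinite.
   By (b), s is not eventually below f, so s is not in G.  The group <G, s> consists of
   the values of words over the letters G u {s, s'}.  Every word can be shortened, or
   conjugated to a shorter word, until it is cyclically reduced; for a cyclically reduced
   word, a fixed point far out gives a periodic orbit, and (a), (b) and the boundedness
   of G rule out a maximum of that orbit.  Hence <G, s> is cofinitary and properly
   contains G. *)


(* The value of a word: the composition of its letters, the first letter applied last. *)
definition eval_word :: "('a \<Rightarrow> 'a) list \<Rightarrow> 'a \<Rightarrow> 'a" where
  "eval_word ws = foldr (\<circ>) ws id"

lemma eval_word_Nil [simp]: "eval_word [] = id"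
  by (simp add: eval_word_def)

lemma eval_word_Cons [simp]: "eval_word (a # ws) = a \<circ> eval_word ws"
  by (simp add: eval_word_def)

lemma eval_word_append [simp]: "eval_word (xs @ ys) = eval_word xs \<circ> eval_word ys"
  by (induction xs) auto

lemma eval_word_drop_nth:
  "i < length ws \<Longrightarrow> eval_word (drop i ws) = ws ! i \<circ> eval_word (drop (Suc i) ws)"
  by (simp add: Cons_nth_drop_Suc[symmetric])

lemma eval_word_merge:
  assumes "Suc i < length ws"
  shows "eval_word (take i ws @ (ws ! i \<circ> ws ! Suc i) # drop (Suc (Suc i)) ws) = eval_word ws"
proof -
  have "ws = take i ws @ ws ! i # ws ! Suc i # drop (Suc (Suc i)) ws"
    using assms by (metis Cons_nth_drop_Suc Suc_lessD append_take_drop_id)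
  then show ?thesis by (metis eval_word_append eval_word_Cons comp_assoc)
qed

lemma eval_word_rotate:
  assumes "bij b"
  shows "eval_word (a # mid @ [b]) = inv b \<circ> eval_word ((b \<circ> a) # mid) \<circ> b"
  using assms by (simp add: fun_eq_iff bij_is_inj)

lemma eval_word_bij: "(\<And>a. a \<in> set ws \<Longrightarrow> bij a) \<Longrightarrow> bij (eval_word ws)"
  by (induction ws) (auto intro: bij_comp)

lemma inv_eval_word:
  "(\<And>a. a \<in> set ws \<Longrightarrow> bij a) \<Longrightarrow> inv (eval_word ws) = eval_word (rev (map inv ws))"
proof (induction ws)
  case Nil
  then show ?case by (simp add: inv_id)
next
  case (Cons a ws)
  then have "inv (eval_word (a # ws)) = inv (eval_word ws) \<circ> inv a"
    by (simp add: o_inv_distrib eval_word_bij)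
  also have "\<dots> = eval_word (rev (map inv (a # ws)))"
    using Cons by simp
  finally show ?case .
qed

(* All values of words over L; this is the group generated by L when L is closed under
   inverses. *)
definition words :: "('a \<Rightarrow> 'a) set \<Rightarrow> ('a \<Rightarrow> 'a) set" where
  "words L = eval_word ` {ws. set ws \<subseteq> L}"

lemma letter_in_words: "a \<in> L \<Longrightarrow> a \<in> words L"
  unfolding words_def by (rule image_eqI[of _ _ "[a]"]) auto

lemma Sym_subgroup_words:
  assumes bij: "\<And>a. a \<in> L \<Longrightarrow> bij a" and inv: "\<And>a. a \<in> L \<Longrightarrow> inv a \<in> L"
  shows "Sym_subgroup (words L)"
  unfolding Sym_subgroup_def
proof (intro conjI ballI)
  show "words L \<subseteq> {f. bij f}"
    using bij by (auto simp: words_def intro!: eval_word_bij)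
  show "id \<in> words L"
    unfolding words_def by (rule image_eqI[of _ _ "[]"]) auto
next
  fix g h assume "g \<in> words L" "h \<in> words L"
  then obtain xs ys where "set xs \<subseteq> L" "set ys \<subseteq> L" "g = eval_word xs" "h = eval_word ys"
    by (auto simp: words_def)
  then show "g \<circ> h \<in> words L"
    unfolding words_def by (intro image_eqI[of _ _ "xs @ ys"]) auto
next
  fix g assume "g \<in> words L"
  then obtain xs where xs: "set xs \<subseteq> L" "g = eval_word xs"
    by (auto simp: words_def)
  then have "inv g = eval_word (rev (map inv xs))"
    using bij inv_eval_word by blast
  moreover have "set (rev (map inv xs)) \<subseteq> L"
    using xs inv by auto
  ultimately show "inv g \<in> words L"
    by (auto simp: words_def)
qed

definition Fix :: "('a \<Rightarrow> 'a) \<Rightarrow> 'a set" where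
  "Fix g = {x. g x = x}"

definition cofinitary_perm :: "('a \<Rightarrow> 'a) \<Rightarrow> bool" where
  "cofinitary_perm g \<longleftrightarrow> g = id \<or> finite (Fix g)"

lemma cofinitary_iff: "cofinitary G \<longleftrightarrow> Sym_subgroup G \<and> (\<forall>g\<in>G. cofinitary_perm g)"
  by (auto simp: cofinitary_def cofinitary_perm_def Fix_def)

lemma cofinitary_perm_conj:
  assumes "bij b" and "cofinitary_perm h"
  shows "cofinitary_perm (inv b \<circ> h \<circ> b)"
proof (cases "h = id")
  case True
  then show ?thesis
    using assms(1) by (simp add: cofinitary_perm_def bij_is_inj)
next
  case False
  then have "finite (Fix h)"
    using assms(2) by (simp add: cofinitary_perm_def)
  moreover have "Fix (inv b \<circ> h \<circ> b) = b -` Fix h"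
    using assms(1) by (auto simp: Fix_def) (metis bij_inv_eq_iff)+
  ultimately show ?thesis
    using assms(1) by (simp add: cofinitary_perm_def finite_vimageI bij_is_inj)
qed

definition cyclically_reduced :: "('a \<Rightarrow> 'a) set \<Rightarrow> ('a \<Rightarrow> 'a) list \<Rightarrow> bool" where
  "cyclically_reduced L ws \<longleftrightarrow>
     ws \<noteq> [] \<and> (\<forall>i<length ws. ws ! i \<circ> ws ! (Suc i mod length ws) \<notin> L)"

lemma reduction_cases:
  assumes "2 \<le> length ws"
  obtains (inner) i where "Suc i < length ws" "ws ! i \<circ> ws ! Suc i \<in> L"
    | (ends) a mid b where "ws = a # mid @ [b]" "b \<circ> a \<in> L"
    | (reduced) "cyclically_reduced L ws"
proof -
  obtain a mid b where ws: "ws = a # mid @ [b]"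
    using assms by (cases ws; cases "tl ws" rule: rev_exhaust) auto
  show thesis
  proof (cases "(\<exists>i. Suc i < length ws \<and> ws ! i \<circ> ws ! Suc i \<in> L) \<or> b \<circ> a \<in> L")
    case True
    then show ?thesis using ws that(1,2) by blast
  next
    case no_merge: False
    have "ws ! i \<circ> ws ! (Suc i mod length ws) \<notin> L" if "i < length ws" for i
    proof (cases "Suc i < length ws")
      case True
      then show ?thesis using no_merge by simp
    next
      case False
      then have "Suc i = length ws" using that by simp
      then have "ws ! i = b" "ws ! (Suc i mod length ws) = a"
        using ws by (auto simp: nth_append)
      then show ?thesis using no_merge by simp
    qed
    then show thesis using that(3) ws by (simp add: cyclically_reduced_def)
  qed
qed

definition cyclic_letter :: "('a \<Rightarrow> 'a) list \<Rightarrow> nat \<Rightarrow> 'a \<Rightarrow> 'a" where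
  "cyclic_letter ws i = ws ! (i mod length ws)"

definition cyclic_orbit :: "('a \<Rightarrow> 'a) list \<Rightarrow> 'a \<Rightarrow> nat \<Rightarrow> 'a" where
  "cyclic_orbit ws x i = eval_word (drop (i mod length ws) ws) x"

lemma cyclic_letter_in_set: "ws \<noteq> [] \<Longrightarrow> cyclic_letter ws i \<in> set ws"
  by (simp add: cyclic_letter_def)

lemma cyclic_letter_onto: "g \<in> set ws \<Longrightarrow> \<exists>i. g = cyclic_letter ws i"
  by (metis cyclic_letter_def in_set_conv_nth mod_less)

lemma cyclically_reduced_adjacent:
  assumes "cyclically_reduced L ws"
  shows "cyclic_letter ws i \<circ> cyclic_letter ws (Suc i) \<notin> L"
proof -
  have "i mod length ws < length ws"
    using assms by (simp add: cyclically_reduced_def)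
  then have "ws ! (i mod length ws) \<circ> ws ! (Suc (i mod length ws) mod length ws) \<notin> L"
    using assms by (simp add: cyclically_reduced_def)
  then show ?thesis
    by (simp add: cyclic_letter_def mod_Suc_eq)
qed

lemma cyclic_orbit_step:
  assumes "eval_word ws x = x" "ws \<noteq> []"
  shows "cyclic_orbit ws x i = cyclic_letter ws i (cyclic_orbit ws x (Suc i))"
proof -
  let ?m = "length ws" and ?j = "i mod length ws"
  have j: "?j < ?m" using assms(2) by simp
  show ?thesis
  proof (cases "Suc ?j < ?m")
    case True
    then have "Suc i mod ?m = Suc ?j" by (simp add: mod_Suc)
    then show ?thesis
      using eval_word_drop_nth[OF j] by (simp add: cyclic_orbit_def cyclic_letter_def)
  next
    case False
    then have "Suc i mod ?m = 0" "Suc ?j = ?m" using j by (auto simp: mod_Suc)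
    then show ?thesis
      using eval_word_drop_nth[OF j] assms(1) by (simp add: cyclic_orbit_def cyclic_letter_def)
  qed
qed

(* The orbit is periodic, so it attains its maximum, and even at a position of the form
   c + 2 (which leaves room for two orbit points on either side). *)
lemma cyclic_orbit_peak:
  fixes x :: "'a :: linorder"
  assumes "ws \<noteq> []"
  obtains c where "\<And>i. cyclic_orbit ws x i \<le> cyclic_orbit ws x (Suc (Suc c))"
proof -
  let ?m = "length ws" and ?p = "cyclic_orbit ws x"
  have "?p i \<in> (\<lambda>j. eval_word (drop j ws) x) ` {..<?m}" for i
    unfolding cyclic_orbit_def using assms by (intro imageI) simp
  then have "range ?p \<subseteq> (\<lambda>j. eval_word (drop j ws) x) ` {..<?m}"
    by blast
  then have finite_orbit: "finite (range ?p)"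
    by (rule finite_subset) simp
  have "Max (range ?p) \<in> range ?p"
    using finite_orbit by (intro Max_in) auto
  then obtain k where k: "Max (range ?p) = ?p k"
    by (rule rangeE)
  have "2 \<le> 2 * ?m"
    using assms by (simp add: Suc_le_eq)
  then have "Suc (Suc (k + 2 * ?m - 2)) = k + 2 * ?m"
    by arith
  then have "?p (Suc (Suc (k + 2 * ?m - 2))) = ?p k"
    by (simp add: cyclic_orbit_def)
  moreover have "?p i \<le> ?p k" for i
    unfolding k[symmetric] using finite_orbit by (intro Max_ge) auto
  ultimately show ?thesis
    using that by metis
qed

lemma compact_coordinate_bounded:
  assumes "compact K"
  shows "\<exists>b. \<forall>g\<in>K. g n \<le> (b::nat)"
proof (cases "K = {}")
  case False
  have "compact ((\<lambda>g. g n) ` K)"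
    by (rule compact_continuous_image[OF _ assms])
       (intro continuous_on_subset[OF continuous_on_product_coordinates]; simp)
  then obtain t where "\<forall>x\<in>(\<lambda>g. g n) ` K. x \<le> t"
    using False compact_attains_sup by (metis image_is_empty)
  then show ?thesis by auto
qed simp

(* A K_sigma set is eventually bounded, by a diagonal bound over the compact pieces. *)
lemma K_sigma_eventually_bounded:
  assumes "K_sigma G"
  shows "eventually_bounded G"
proof -
  obtain K :: "nat \<Rightarrow> (nat \<Rightarrow> nat) set" where K: "\<And>i. compact (K i)" "G \<subseteq> (\<Union>i. K i)"
    using assms unfolding K_sigma_def by blast
  obtain B where B: "\<And>i n g. g \<in> K i \<Longrightarrow> g n \<le> B i n"
    using compact_coordinate_bounded[OF K(1)] by metis
  define F where "F n = Suc (\<Sum>i\<le>n. B i n)" for n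
  have "eventually_less g F" if "g \<in> K i" for g i
  proof -
    have "g n < F n" if "i \<le> n" for n
    proof -
      have "B i n \<le> (\<Sum>i\<le>n. B i n)"
        using that by (intro member_le_sum) auto
      then show ?thesis
        using B[OF \<open>g \<in> K i\<close>, of n] by (simp add: F_def)
    qed
    then have "{n. \<not> g n < F n} \<subseteq> {..<i}"
      by (auto simp: not_le[symmetric])
    then show ?thesis
      by (simp add: eventually_less_def finite_subset)
  qed
  then show ?thesis
    using K(2) unfolding eventually_bounded_def by blast
qed

lemma eventually_bounded_dominating:
  assumes "eventually_bounded G"
  obtains f where "mono f" "\<And>n. n < f n" "\<forall>g\<in>G. eventually_less g f"
proof -
  obtain f0 where f0: "\<forall>g\<in>G. eventually_less g f0"
    using assms by (auto simp: eventually_bounded_def)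
  define f where "f n = Suc (n + (\<Sum>i\<le>n. f0 i))" for n
  have "mono f"
    by (rule monoI) (auto simp: f_def intro!: add_mono sum_mono2)
  moreover have "n < f n" for n
    by (simp add: f_def)
  moreover have "eventually_less g f" if "g \<in> G" for g
  proof -
    have "f0 n \<le> f n" for n
      using member_le_sum[of n "{..n}" f0] by (simp add: f_def)
    then have "{n. \<not> g n < f n} \<subseteq> {n. \<not> g n < f0 n}"
      by (auto intro: less_le_trans)
    then show ?thesis
      using f0 that by (auto simp: eventually_less_def intro: finite_subset)
  qed
  ultimately show ?thesis using that by blast
qed

locale escaping_shift =
  fixes f s s' :: "nat \<Rightarrow> nat" and S :: "nat set"
  assumes f_above: "\<And>x. x < f x"
    and s_s': "\<And>x. s (s' x) = x"
    and s'_s: "\<And>x. s' (s x) = x"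
    and moves_up: "\<And>x. x < s x \<or> x < s' x"
    and escapes: "\<And>x. x \<notin> S \<Longrightarrow> f x \<le> s x \<and> f x \<le> s' x"
    and sparse: "\<And>x y. x \<in> S \<Longrightarrow> y \<in> S \<Longrightarrow> x < y \<Longrightarrow> f x \<le> y"
    and infinite_outside: "infinite (- S)"

context escaping_shift
begin

lemma s_comp_s': "s \<circ> s' = id" and s'_comp_s: "s' \<circ> s = id"
  by (simp_all add: fun_eq_iff s_s' s'_s)

lemma bij_s: "bij s" and bij_s': "bij s'"
  using o_bij s_comp_s' s'_comp_s by blast+

lemma inv_s: "inv s = s'" and inv_s': "inv s' = s"
  using inv_unique_comp s_comp_s' s'_comp_s by blast+

lemma Fix_s: "Fix s = {}" and Fix_s': "Fix s' = {}"
  using moves_up s_s' s'_s by (auto simp: Fix_def) (metis less_irrefl)+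

lemma s_unbounded: "\<not> eventually_less s f"
proof
  assume "eventually_less s f"
  moreover have "- S \<subseteq> {n. \<not> s n < f n}"
    using escapes by (auto simp: not_less)
  ultimately show False
    using infinite_outside finite_subset unfolding eventually_less_def by blast
qed

lemma step_back: "c \<in> {s, s'} \<Longrightarrow> c v = z \<Longrightarrow> v \<in> {s z, s' z}"
  using s_s' s'_s by auto

(* Two points y < z < f y cannot both be moved by a shift letter to points at most z: both
   would have to lie in S, which is too sparse for that. *)
lemma no_close_returns:
  assumes "y < z" "z < f y"
    and "u \<in> {s y, s' y}" "u \<le> z" and "v \<in> {s z, s' z}" "v \<le> z"
  shows False
proof -
  have "z \<in> S"
  proof (rule ccontr)
    assume "z \<notin> S"
    then have "f z \<le> v" using escapes assms(5) by auto
    then show False using assms(6) f_above[of z] by simp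
  qed
  moreover have "y \<in> S"
  proof (rule ccontr)
    assume "y \<notin> S"
    then have "f y \<le> u" using escapes assms(3) by auto
    then show False using assms(2,4) by simp
  qed
  ultimately show False
    using sparse[of y z] assms(1,2) by simp
qed

end

primrec sparse_seq :: "(nat \<Rightarrow> nat) \<Rightarrow> nat \<Rightarrow> nat" where
  "sparse_seq f 0 = f 1 + 2"
| "sparse_seq f (Suc i) = f (sparse_seq f i) + f (2 * i + 3) + 2"

lemma sparse_seq_step: "f (sparse_seq f i) + 2 \<le> sparse_seq f (Suc i)"
  by simp

lemma sparse_seq_above: "f (2 * i + 1) \<le> sparse_seq f i"
  by (cases i) (simp_all add: numeral_eq_Suc)

lemma strict_mono_sparse_seq:
  assumes "\<And>x. x < f x"
  shows "strict_mono (sparse_seq f)"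
proof (rule strict_monoI_Suc)
  fix i
  show "sparse_seq f i < sparse_seq f (Suc i)"
    using assms[of "sparse_seq f i"] sparse_seq_step[of f i] by linarith
qed

lemma gappy_complement:
  fixes A :: "nat set"
  assumes gap: "\<And>x. x \<in> A \<Longrightarrow> Suc x \<notin> A"
  shows "infinite (- A)" and "enumerate (- A) k \<le> 2 * k + 1"
proof -
  have "\<exists>n\<ge>m. n \<in> - A" for m
    using gap[of m] by (metis Compl_iff le_SucI order_refl)
  then show inf: "infinite (- A)"
    using infinite_nat_iff_unbounded_le by blast
  show "enumerate (- A) k \<le> 2 * k + 1"
  proof (induction k)
    case 0
    have "0 \<notin> A \<or> 1 \<notin> A"
      using gap[of 0] by auto
    then show ?case
      by (auto simp: enumerate_0 intro: Least_le order_trans)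
  next
    case (Suc k)
    let ?r = "enumerate (- A) k"
    have "Suc ?r \<notin> A \<or> Suc (Suc ?r) \<notin> A"
      using gap by blast
    then have "enumerate (- A) (Suc k) \<le> Suc (Suc ?r)"
      unfolding enumerate_Suc''[OF inf]
      by (metis (no_types, lifting) ComplI Least_le lessI less_SucI le_Suc_eq)
    with Suc show ?case by simp
  qed
qed

(* A bijection between the nonzero integers and N, growing with the absolute value. *)
definition slot :: "int \<Rightarrow> nat" where
  "slot n = int_encode (if 0 < n then n - 1 else n)"

definition unslot :: "nat \<Rightarrow> int" where
  "unslot j = (let m = int_decode j in if 0 \<le> m then m + 1 else m)"

lemma unslot_slot: "n \<noteq> 0 \<Longrightarrow> unslot (slot n) = n"
  by (simp add: slot_def unslot_def)

lemma slot_unslot: "slot (unslot j) = j"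
  by (simp add: slot_def unslot_def Let_def)

lemma unslot_nonzero: "unslot j \<noteq> 0"
  by (simp add: unslot_def Let_def)

lemma slot_grows:
  shows "0 < n \<Longrightarrow> slot n < slot (n + 1)" and "n < 0 \<Longrightarrow> slot n < slot (n - 1)"
  by (simp_all add: slot_def int_encode_def sum_encode_def nat_diff_distrib)

lemma prod_encode_strict_mono: "j < j' \<Longrightarrow> prod_encode (k, j) < prod_encode (k, j')"
proof -
  have "strict_mono triangle"
    by (rule strict_monoI_Suc) simp
  then show "j < j' \<Longrightarrow> ?thesis"
    by (simp add: prod_encode_def strict_mono_less)
qed

(* Partition of N into chains indexed by Z: the k-th chain has r k at position 0 and
   runs through values of h elsewhere. *)
definition chain :: "(nat \<Rightarrow> nat) \<Rightarrow> (nat \<Rightarrow> nat) \<Rightarrow> nat \<times> int \<Rightarrow> nat" where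
  "chain r h = (\<lambda>(k, n). if n = 0 then r k else h (prod_encode (k, slot n)))"

definition unchain :: "(nat \<Rightarrow> nat) \<Rightarrow> (nat \<Rightarrow> nat) \<Rightarrow> nat \<Rightarrow> nat \<times> int" where
  "unchain r h x = (if x \<in> range h then (case prod_decode (inv h x) of (k, j) \<Rightarrow> (k, unslot j))
                    else (inv r x, 0))"

lemma chain_bijection:
  assumes "inj h" "inj r" "range r = - range h"
  shows "unchain r h (chain r h p) = p" and "chain r h (unchain r h x) = x"
proof -
  obtain k n where p: "p = (k, n)" by (cases p)
  show "unchain r h (chain r h p) = p"
  proof (cases "n = 0")
    case True
    have "r k \<notin> range h" using assms(3) by blast
    then show ?thesis using True assms(2) by (simp add: p chain_def unchain_def)
  next
    case False
    then show ?thesis using assms(1) by (simp add: p chain_def unchain_def unslot_slot)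
  qed
  show "chain r h (unchain r h x) = x"
  proof (cases "x \<in> range h")
    case True
    then obtain i where "x = h i" by blast
    moreover obtain k j where "prod_decode i = (k, j)" by (cases "prod_decode i")
    ultimately show ?thesis
      using assms(1) unslot_nonzero
      by (simp add: chain_def unchain_def slot_unslot) (metis prod_decode_inverse)
  next
    case False
    then have "x \<in> range r" using assms(3) by blast
    then show ?thesis using False by (simp add: chain_def unchain_def f_inv_into_f)
  qed
qed

definition shift :: "('b \<times> int \<Rightarrow> 'a) \<Rightarrow> ('a \<Rightarrow> 'b \<times> int) \<Rightarrow> int \<Rightarrow> 'a \<Rightarrow> 'a" where
  "shift e d t x = (case d x of (k, n) \<Rightarrow> e (k, n + t))"

lemma shift_shift:
  assumes "\<And>p. d (e p) = p"
  shows "shift e d t (shift e d u x) = shift e d (u + t) x"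
  using assms by (simp add: shift_def add.assoc split: prod.split)

lemma shift_zero:
  assumes "\<And>x. e (d x) = x"
  shows "shift e d 0 x = x"
  using assms by (simp add: shift_def split: prod.split)

lemma shift_moves_up:
  assumes "\<And>x. e (d x) = x"
    and up: "\<And>k n. 0 \<le> n \<Longrightarrow> e (k, n) < e (k, n + 1)"
    and down: "\<And>k n. n \<le> 0 \<Longrightarrow> e (k, n) < e (k, n - 1)"
  shows "x < shift e d 1 x \<or> x < shift e d (-1) x"
proof -
  obtain k n where dx: "d x = (k, n)" by (cases "d x")
  then have x: "x = e (k, n)" using assms(1) by metis
  have "shift e d t x = e (k, n + t)" for t
    by (simp add: shift_def dx)
  then show ?thesis
    using up[of n k] down[of n k] x by (cases "0 \<le> n") auto
qed

lemma chain_grows: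
  assumes h: "strict_mono h" and base: "\<And>k j. r k < h (prod_encode (k, j))"
  shows "0 \<le> n \<Longrightarrow> chain r h (k, n) < chain r h (k, n + 1)"
    and "n \<le> 0 \<Longrightarrow> chain r h (k, n) < chain r h (k, n - 1)"
proof -
  have step: "h (prod_encode (k, i)) < h (prod_encode (k, j))" if "i < j" for i j
    using prod_encode_strict_mono[OF that] h by (simp add: strict_mono_less)
  show "chain r h (k, n) < chain r h (k, n + 1)" if "0 \<le> n"
  proof (cases "n = 0")
    case True
    then show ?thesis using base by (simp add: chain_def)
  next
    case False
    then have "slot n < slot (n + 1)" using that slot_grows(1) by simp
    then show ?thesis using False that step by (simp add: chain_def)
  qed
  show "chain r h (k, n) < chain r h (k, n - 1)" if "n \<le> 0"
  proof (cases "n = 0")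
    case True
    then show ?thesis using base by (simp add: chain_def)
  next
    case False
    then have "slot n < slot (n - 1)" using that slot_grows(2) by simp
    then show ?thesis using False that step by (simp add: chain_def)
  qed
qed

lemma chain_escaping_shift:
  assumes above: "\<And>x. x < f x" and h: "strict_mono h"
    and sparse: "\<And>x y. x \<in> range h \<Longrightarrow> y \<in> range h \<Longrightarrow> x < y \<Longrightarrow> f x \<le> y"
    and r: "inj r" "range r = - range h" and infinite_compl: "infinite (- range h)"
    and base: "\<And>k j. f (r k) \<le> h (prod_encode (k, j))"
  defines "e \<equiv> chain r h" and "d \<equiv> unchain r h"
  shows "escaping_shift f (shift e d 1) (shift e d (-1)) (range h)"
proof
  have de: "d (e p) = p" and ed: "e (d x) = x" for p x
    using chain_bijection[OF _ r] h by (simp_all add: d_def e_def strict_mono_imp_inj_on)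
  show "shift e d 1 (shift e d (-1) x) = x" "shift e d (-1) (shift e d 1 x) = x" for x
    using shift_shift[of d e] shift_zero[of e d] de ed by simp_all
  have "r k < h (prod_encode (k, j))" for k j
    using above[of "r k"] base[of k j] by simp
  then have "e (k, n) < e (k, n + 1)" if "0 \<le> n" for k n
    using chain_grows(1)[OF h _ that] unfolding e_def by blast
  moreover have "e (k, n) < e (k, n - 1)" if "n \<le> 0" for k n
    using chain_grows(2)[OF h _ that] \<open>\<And>k j. r k < h (prod_encode (k, j))\<close>
    unfolding e_def by blast
  ultimately show "x < shift e d 1 x \<or> x < shift e d (-1) x" for x
    by (rule shift_moves_up[OF ed])
  show "f x \<le> shift e d 1 x \<and> f x \<le> shift e d (-1) x" if "x \<notin> range h" for x
  proof -
    have "x \<in> range r"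
      using that r(2) by simp
    then obtain k where x: "x = r k"
      by blast
    then have "d x = (k, 0)"
      using de[of "(k, 0)"] by (simp add: e_def chain_def)
    then have "shift e d t x = h (prod_encode (k, slot t))" if "t \<noteq> 0" for t
      using that by (simp add: shift_def e_def chain_def)
    then show ?thesis
      using base x by simp
  qed
  show "f x \<le> y" if "x \<in> range h" "y \<in> range h" "x < y" for x y
    using sparse that .
qed (fact above infinite_compl)+

(* Construction: take h = sparse_seq f and enumerate the complement of its range by r.
   Since r k <= 2 k + 1 and h k >= f (2 k + 1), every base point r k is mapped by f below
   its whole chain. *)
lemma escaping_shift_exists:
  assumes mono: "mono f" and above: "\<And>x. x < f x"
  shows "\<exists>s s' S. escaping_shift f s s' S"
proof -
  define h where "h = sparse_seq f"
  have h: "strict_mono h"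
    unfolding h_def using strict_mono_sparse_seq[OF above] .
  have separated: "f x + 2 \<le> y" if xy: "x \<in> range h" "y \<in> range h" "x < y" for x y
  proof -
    obtain i j where "x = h i" "y = h j" "i < j"
      using xy h by (auto simp: strict_mono_less)
    then show ?thesis
      using sparse_seq_step[of f i] strict_mono_less_eq[OF h, of "Suc i" j] by (simp add: h_def)
  qed
  have gap: "Suc x \<notin> range h" if "x \<in> range h" for x
    using separated[OF that, of "Suc x"] above[of x] by auto
  define r where "r = enumerate (- range h)"
  have infinite_compl: "infinite (- range h)"
    using gappy_complement(1)[OF gap] by simp
  have "inj r" "range r = - range h"
    using strict_mono_enumerate[OF infinite_compl] range_enumerate[OF infinite_compl]
    by (simp_all add: r_def strict_mono_imp_inj_on)
  have base: "f (r k) \<le> h (prod_encode (k, j))" for k j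
  proof -
    have "f (r k) \<le> f (2 * k + 1)"
      using mono gappy_complement(2)[OF gap] by (simp add: monoD r_def)
    also have "\<dots> \<le> h k"
      unfolding h_def by (rule sparse_seq_above)
    also have "\<dots> \<le> h (prod_encode (k, j))"
      using h le_prod_encode_1 by (simp add: strict_mono_less_eq)
    finally show ?thesis .
  qed
  have "f x \<le> y" if "x \<in> range h" "y \<in> range h" "x < y" for x y
    using separated[OF that] by simp
  then show ?thesis
    using chain_escaping_shift[OF above h _ \<open>inj r\<close> \<open>range r = - range h\<close> infinite_compl base]
    by blast
qed

locale cofinitary_extension = escaping_shift +
  fixes G :: "(nat \<Rightarrow> nat) set"
  assumes cofinitary_G: "cofinitary G"
    and bounded_G: "\<forall>g\<in>G. eventually_less g f"
begin

definition letters :: "(nat \<Rightarrow> nat) set" where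
  "letters = G \<union> {s, s'}"

lemma G_subgroup: "Sym_subgroup G"
  using cofinitary_G by (simp add: cofinitary_def)

lemma id_in_G: "id \<in> G" and comp_in_G: "g \<in> G \<Longrightarrow> h \<in> G \<Longrightarrow> g \<circ> h \<in> G"
  and inv_in_G: "g \<in> G \<Longrightarrow> inv g \<in> G"
  using G_subgroup by (auto simp: Sym_subgroup_def)

lemma letters_bij: "a \<in> letters \<Longrightarrow> bij a"
  using G_subgroup bij_s bij_s' by (auto simp: letters_def Sym_subgroup_def)

lemma letters_inv: "a \<in> letters \<Longrightarrow> inv a \<in> letters"
  using inv_in_G inv_s inv_s' by (auto simp: letters_def)

lemma letters_cofinitary_perm: "a \<in> letters \<Longrightarrow> cofinitary_perm a"
  using cofinitary_G Fix_s Fix_s' by (auto simp: letters_def cofinitary_iff cofinitary_perm_def)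

definition wild :: "(nat \<Rightarrow> nat) \<Rightarrow> nat set" where
  "wild g = {y. g y = y \<or> \<not> g y < f y \<or> \<not> inv g y < f y}"

lemma finite_wild:
  assumes "g \<in> G" "g \<noteq> id"
  shows "finite (wild g)"
proof -
  have "finite {y. g y = y}"
    using assms cofinitary_G by (auto simp: cofinitary_def)
  moreover have "finite {y. \<not> g y < f y}" "finite {y. \<not> inv g y < f y}"
    using assms bounded_G inv_in_G by (auto simp: eventually_less_def)
  moreover have "wild g = {y. g y = y} \<union> {y. \<not> g y < f y} \<union> {y. \<not> inv g y < f y}"
    by (auto simp: wild_def)
  ultimately show ?thesis
    by simp
qed

lemma G_neighbour_close:
  assumes "g \<in> G" "y \<notin> wild g" "z \<notin> wild g" "y \<le> z" and "z = g y \<or> y = g z"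
  shows "y < z" and "z < f y"
proof -
  have "bij g"
    using assms(1) G_subgroup by (auto simp: Sym_subgroup_def)
  have "y \<noteq> z \<and> z < f y"
    using assms(5)
  proof
    assume "z = g y"
    then show ?thesis using assms(2) by (auto simp: wild_def)
  next
    assume "y = g z"
    then have "inv g y = z"
      using \<open>bij g\<close> by (simp add: bij_is_inj)
    then show ?thesis using assms(2,3) \<open>y = g z\<close> by (auto simp: wild_def)
  qed
  then show "y < z" "z < f y"
    using assms(4) by auto
qed

lemma irreducible_pair:
  assumes "a \<in> letters" "b \<in> letters" "a \<circ> b \<notin> letters"
  shows "a \<noteq> id" and "b \<noteq> id" and "a \<notin> G \<or> b \<notin> G"
    and "a \<notin> G \<Longrightarrow> b \<notin> G \<Longrightarrow> a = b \<and> a \<in> {s, s'}"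
proof -
  show "a \<noteq> id" "b \<noteq> id" "a \<notin> G \<or> b \<notin> G"
    using assms comp_in_G by (auto simp: letters_def)
  assume "a \<notin> G" "b \<notin> G"
  then show "a = b \<and> a \<in> {s, s'}"
    using assms id_in_G s_comp_s' s'_comp_s by (auto simp: letters_def)
qed

(* Core of the argument: no point of an orbit of a cyclically reduced word can be a local
   maximum of height above every wild point of its letters. *)
lemma no_peak:
  assumes letter: "a \<in> letters" "b \<in> letters" "c \<in> letters" "d \<in> letters"
    and irreducible: "a \<circ> b \<notin> letters" "b \<circ> c \<notin> letters" "c \<circ> d \<notin> letters"
    and orbit: "p0 = a p1" "p1 = b z" "z = c p3" "p3 = d p4"
    and peak: "p0 \<le> z" "p1 \<le> z" "p3 \<le> z" "p4 \<le> z"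
    and tame: "\<And>g y. g \<in> {a, b, c, d} \<Longrightarrow> g \<in> G \<Longrightarrow> y \<in> {p0, p1, z, p3, p4} \<Longrightarrow> y \<notin> wild g"
  shows False
proof -
  note ab = irreducible_pair[OF letter(1,2) irreducible(1)]
    and bc = irreducible_pair[OF letter(2,3) irreducible(2)]
    and cd = irreducible_pair[OF letter(3,4) irreducible(3)]
  have shift_letter: "g \<in> {s, s'}" if "g \<in> letters" "g \<notin> G" for g
    using that by (auto simp: letters_def)
  consider (mid) "c \<in> G" | (left) "c \<notin> G" "b \<in> G" | (none) "b \<notin> G" "c \<notin> G"
    by blast
  then show False
  proof cases
    case mid
    then have "b \<in> {s, s'}" "d \<in> {s, s'}"
      using bc(3) cd(3) shift_letter letter by auto
    have "p3 \<notin> wild c" "z \<notin> wild c"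
      using tame mid by simp_all
    then have "p3 < z" "z < f p3"
      using G_neighbour_close[OF mid _ _ peak(3)] orbit(3) by auto
    moreover have "p4 \<in> {s p3, s' p3}"
      using step_back[OF \<open>d \<in> {s, s'}\<close>] orbit(4) by simp
    moreover have "p1 \<in> {s z, s' z}"
      using \<open>b \<in> {s, s'}\<close> orbit(2) by auto
    ultimately show False
      using no_close_returns peak(2,4) by blast
  next
    case left
    then have "a \<in> {s, s'}" "c \<in> {s, s'}"
      using ab(3) shift_letter letter by auto
    have "p1 \<notin> wild b" "z \<notin> wild b"
      using tame left by simp_all
    then have "p1 < z" "z < f p1"
      using G_neighbour_close[OF left(2) _ _ peak(2)] orbit(2) by auto
    moreover have "p0 \<in> {s p1, s' p1}"
      using \<open>a \<in> {s, s'}\<close> orbit(1) by auto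
    moreover have "p3 \<in> {s z, s' z}"
      using step_back[OF \<open>c \<in> {s, s'}\<close>] orbit(3) by simp
    ultimately show False
      using no_close_returns peak(1,3) by blast
  next
    case none
    then have "b = c" "b \<in> {s, s'}"
      using bc(4) by auto
    then have "s z \<le> z \<and> s' z \<le> z"
      using orbit(2,3) peak(2,3) s_s' s'_s by auto
    then show False
      using moves_up[of z] by simp
  qed
qed

lemma reduced_word_letters_not_id:
  assumes ws: "set ws \<subseteq> letters" and red: "cyclically_reduced letters ws"
    and "g \<in> set ws"
  shows "g \<noteq> id"
proof -
  have "ws \<noteq> []"
    using red by (simp add: cyclically_reduced_def)
  then have "cyclic_letter ws i \<in> letters" for i
    using cyclic_letter_in_set ws by blast
  moreover obtain i where "g = cyclic_letter ws i"
    using cyclic_letter_onto \<open>g \<in> set ws\<close> by blast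
  ultimately show ?thesis
    using irreducible_pair(1) cyclically_reduced_adjacent[OF red] by metis
qed

(* A cyclically reduced word has only finitely many fixed points: outside a finite set B,
   the cyclic orbit of a fixed point avoids all wild points of the letters from G, so its
   peak contradicts no_peak. *)
lemma reduced_word_finite_fix:
  assumes ws: "set ws \<subseteq> letters" and red: "cyclically_reduced letters ws"
  shows "finite (Fix (eval_word ws))"
proof -
  have ne: "ws \<noteq> []"
    using red by (simp add: cyclically_reduced_def)
  let ?W = "cyclic_letter ws"
  have W_letter: "?W i \<in> letters" for i
    using cyclic_letter_in_set[OF ne] ws by blast
  note W_irreducible = cyclically_reduced_adjacent[OF red]
  define Bad where "Bad = (\<Union>g \<in> set ws \<inter> G. wild g)"
  have "finite Bad"
    unfolding Bad_def by (auto intro!: finite_wild reduced_word_letters_not_id[OF ws red])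
  define B where "B = (\<Union>i<length ws. eval_word (drop i ws) -` Bad)"
  have "finite B"
    unfolding B_def
  proof (intro finite_UN_I finite_vimageI)
    fix i
    have "bij (eval_word (drop i ws))"
      using ws letters_bij by (intro eval_word_bij) (meson in_mono set_drop_subset)
    then show "inj (eval_word (drop i ws))" by (rule bij_is_inj)
  qed (simp_all add: \<open>finite Bad\<close>)
  moreover have "Fix (eval_word ws) \<subseteq> B"
  proof
    fix x assume "x \<in> Fix (eval_word ws)"
    let ?p = "cyclic_orbit ws x"
    have orbit: "?p i = ?W i (?p (Suc i))" for i
      using cyclic_orbit_step \<open>x \<in> Fix (eval_word ws)\<close> ne by (simp add: Fix_def)
    obtain c where peak: "\<And>i. ?p i \<le> ?p (Suc (Suc c))"
      using cyclic_orbit_peak[OF ne] by blast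
    show "x \<in> B"
    proof (rule ccontr)
      assume "x \<notin> B"
      have tame: "?p j \<notin> wild (?W i)" if "?W i \<in> G" for i j
      proof -
        have "j mod length ws < length ws"
          using ne by simp
        then have "?p j \<notin> Bad"
          using \<open>x \<notin> B\<close> unfolding B_def cyclic_orbit_def by blast
        then show ?thesis
          using that cyclic_letter_in_set[OF ne] by (auto simp: Bad_def)
      qed
      show False
      proof (rule no_peak[OF W_letter W_letter W_letter W_letter
            W_irreducible[of c] W_irreducible[of "Suc c"] W_irreducible[of "Suc (Suc c)"]
            orbit[of c] orbit[of "Suc c"] orbit[of "Suc (Suc c)"] orbit[of "Suc (Suc (Suc c))"]])
        show "y \<notin> wild g"
          if "g \<in> {?W c, ?W (Suc c), ?W (Suc (Suc c)), ?W (Suc (Suc (Suc c)))}" "g \<in> G"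
            "y \<in> {?p c, ?p (Suc c), ?p (Suc (Suc c)), ?p (Suc (Suc (Suc c))), ?p (Suc (Suc (Suc (Suc c))))}"
          for g y
          using that tame by blast
      qed (rule peak)+
    qed
  qed
  ultimately show ?thesis by (rule finite_subset[rotated])
qed

lemma word_cofinitary_perm: "set ws \<subseteq> letters \<Longrightarrow> cofinitary_perm (eval_word ws)"
proof (induction "length ws" arbitrary: ws rule: less_induct)
  case less
  show ?case
  proof (cases "2 \<le> length ws")
    case False
    then consider "ws = []" | a where "ws = [a]"
      by (cases ws) (auto simp: Suc_le_eq)
    then show ?thesis
      using less.prems letters_cofinitary_perm by cases (auto simp: cofinitary_perm_def)
  next
    case True
    then show ?thesis
    proof (cases rule: reduction_cases[where L = letters])
      case (inner i)
      let ?ws' = "take i ws @ (ws ! i \<circ> ws ! Suc i) # drop (Suc (Suc i)) ws"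
      have "length ?ws' < length ws" "set ?ws' \<subseteq> letters"
        using inner less.prems by (auto dest: in_set_takeD in_set_dropD)
      then show ?thesis
        using less.hyps eval_word_merge[OF inner(1)] by metis
    next
      case (ends a mid b)
      have "length ((b \<circ> a) # mid) < length ws" "set ((b \<circ> a) # mid) \<subseteq> letters"
        using less.prems ends by auto
      then have "cofinitary_perm (eval_word ((b \<circ> a) # mid))"
        by (rule less.hyps)
      moreover have "bij b"
        using less.prems ends letters_bij by auto
      ultimately show ?thesis
        using cofinitary_perm_conj eval_word_rotate ends(1) by metis
    next
      case reduced
      then show ?thesis
        using reduced_word_finite_fix less.prems by (simp add: cofinitary_perm_def)
    qed
  qed
qed

theorem not_maximal: "\<not> maximal_cofinitary G"
proof -
  have "cofinitary (words letters)"
    unfolding cofinitary_iff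
    using Sym_subgroup_words[OF letters_bij letters_inv] word_cofinitary_perm
    by (auto simp: words_def)
  moreover have "G \<subset> words letters"
  proof -
    have "G \<subseteq> letters" "s \<in> letters"
      by (auto simp: letters_def)
    then have "G \<subseteq> words letters" "s \<in> words letters"
      using letter_in_words by blast+
    moreover have "s \<notin> G"
      using s_unbounded bounded_G by blast
    ultimately show ?thesis by blast
  qed
  ultimately show ?thesis
    by (auto simp: maximal_cofinitary_def)
qed

end

corollary bounded_cofinitary_not_maximal:
  assumes "cofinitary G" "eventually_bounded G"
  shows "\<not> maximal_cofinitary G"
proof -
  obtain f where f: "mono f" "\<And>n. n < f n" "\<forall>g\<in>G. eventually_less g f"
    using eventually_bounded_dominating[OF assms(2)] by blast
  then obtain s s' S where "escaping_shift f s s' S"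
    using escaping_shift_exists by blast
  then interpret cofinitary_extension f s s' S G
    using assms(1) f(3) by (simp add: cofinitary_extension_def cofinitary_extension_axioms_def)
  show ?thesis by (rule not_maximal)
qed

theorem mainTheorem18:
  shows "(\<forall>G. cofinitary G \<and> eventually_bounded G \<longrightarrow> \<not> maximal_cofinitary G)
       \<and> (\<forall>G. maximal_cofinitary G \<longrightarrow> \<not> K_sigma G)"
  using bounded_cofinitary_not_maximal K_sigma_eventually_bounded
  by (auto simp: maximal_cofinitary_def)

end
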